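(* A finite simple graph $G=(V,E)$ with at least one edge is uniformly dense if and only if $c(E\setminus A)-c(E)\le |A|/\rho(G)$ for all proper subsets $A\subsetneq E$.
   Context: For $A\subseteq E$, $c(A)$ is the number of connected components of the graph $(V,A)$, $\operatorname{rank}(A)=|V|-c(A)$, $\rho(A)=|A|/\operatorname{rank}(A)$ for nonempty $A$, and $\rho(G)=\rho(E)$. $G$ is uniformly dense if $\rho(A)\le\rho(G)$ for all nonempty $A\subseteq E$. *)

theory Defs
  imports Complex_Main
begin

definition simple_graph :: "'a set \<Rightarrow> 'a set set \<Rightarrow> bool" where
  "simple_graph V E \<longleftrightarrow> finite V \<and>
     (\<forall>e\<in>E. \<exists>u v. u \<in> V \<and> v \<in> V \<and> u \<noteq> v \<and> e = {u, v})"

definition conn_rel :: "'a set \<Rightarrow> 'a set set \<Rightarrow> ('a \<times> 'a) set" where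
  "conn_rel V A = {(u, v). u \<in> V \<and> v \<in> V \<and> (u, v) \<in> ({(x, y). {x, y} \<in> A})\<^sup>*}"

definition ncomp :: "'a set \<Rightarrow> 'a set set \<Rightarrow> nat" where
  "ncomp V A = card (V // conn_rel V A)"

definition grank :: "'a set \<Rightarrow> 'a set set \<Rightarrow> nat" where
  "grank V A = card V - ncomp V A"

definition density :: "'a set \<Rightarrow> 'a set set \<Rightarrow> real" where
  "density V A = real (card A) / real (grank V A)"

definition uniformly_dense :: "'a set \<Rightarrow> 'a set set \<Rightarrow> bool" where
  "uniformly_dense V E \<longleftrightarrow> (\<forall>A. A \<subseteq> E \<and> A \<noteq> {} \<longrightarrow> density V A \<le> density V E)"

end

theory Submission
  imports Defs
begin

text \<open>With \<open>B = E - A\<close>, the inequality for \<open>A\<close> reads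
  \<open>c(B) - c(E) \<le> (|E| - |B|) rank(E) / |E|\<close>; multiplying out, this is
  \<open>|B| rank(E) \<le> |E| (|V| - c(B)) = |E| rank(B)\<close>, i.e. \<open>\<rho>(B) \<le> \<rho>(G)\<close>.
  The only care needed is that all ranks involved are positive, which holds because every
  nonempty edge set of a simple graph joins two distinct vertices. Since \<open>A \<mapsto> E - A\<close> maps the
  proper subsets of \<open>E\<close> onto the nonempty ones, the two conditions coincide.\<close>

lemma conn_rel_equiv: "equiv V (conn_rel V A)"
proof (rule equivI)
  show "conn_rel V A \<subseteq> V \<times> V" unfolding conn_rel_def by auto
  show "refl_on V (conn_rel V A)" unfolding refl_on_def conn_rel_def by auto
  have "sym {(x, y). {x, y} \<in> A}" unfolding sym_def by (auto simp: insert_commute)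
  then show "sym (conn_rel V A)"
    using sym_rtrancl unfolding sym_def conn_rel_def by blast
  show "trans (conn_rel V A)" unfolding trans_def conn_rel_def by auto
qed

lemma ncomp_less_card:
  assumes "finite V" "u \<in> V" "v \<in> V" "u \<noteq> v" "(u, v) \<in> conn_rel V A"
  shows "ncomp V A < card V"
proof -
  let ?class = "\<lambda>x. conn_rel V A `` {x}"
  have "V // conn_rel V A = ?class ` V" unfolding quotient_def by auto
  moreover have "?class u = ?class v"
    using equiv_class_eq[OF conn_rel_equiv assms(5)] .
  then have "\<not> inj_on ?class V" using assms(2-4) unfolding inj_on_def by blast
  then have "card (?class ` V) \<noteq> card V" using eq_card_imp_inj_on[OF assms(1)] by blast
  ultimately show ?thesis
    unfolding ncomp_def using card_image_le[OF assms(1), of ?class] by simp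
qed

lemma simple_graph_finite_edges:
  assumes "simple_graph V E"
  shows "finite E"
proof -
  have "E \<subseteq> Pow V" using assms unfolding simple_graph_def by auto
  moreover have "finite V" using assms unfolding simple_graph_def by simp
  ultimately show ?thesis by (meson finite_Pow_iff finite_subset)
qed

lemma ncomp_less_card_if_nonempty:
  assumes "simple_graph V E" "A \<subseteq> E" "A \<noteq> {}"
  shows "ncomp V A < card V"
proof -
  obtain e where "e \<in> A" using assms(3) by auto
  then obtain u v where uv: "u \<in> V" "v \<in> V" "u \<noteq> v" and "e = {u, v}"
    using assms(1,2) unfolding simple_graph_def by blast
  then have "(u, v) \<in> conn_rel V A"
    using \<open>e \<in> A\<close> unfolding conn_rel_def by auto
  moreover have "finite V" using assms(1) unfolding simple_graph_def by simp
  ultimately show ?thesis using uv by (intro ncomp_less_card)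
qed

lemma divide_le_divide_iff_diff_le:
  fixes n a c b m :: real
  assumes "n - a > 0" "n - c > 0" "m > 0"
  shows "b / (n - a) \<le> m / (n - c) \<longleftrightarrow> a - c \<le> (m - b) / (m / (n - c))"
proof -
  have "b / (n - a) \<le> m / (n - c) \<longleftrightarrow> b * (n - c) \<le> m * (n - a)"
    using assms by (simp add: field_simps)
  also have "\<dots> \<longleftrightarrow> (a - c) * m \<le> (m - b) * (n - c)" by (simp add: algebra_simps)
  also have "\<dots> \<longleftrightarrow> a - c \<le> (m - b) / (m / (n - c))"
    using assms by (simp add: field_simps)
  finally show ?thesis .
qed

lemma density_le_iff_ncomp_diff_le:
  assumes "simple_graph V E" "B \<subseteq> E" "B \<noteq> {}"
  shows "density V B \<le> density V E \<longleftrightarrow>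
    real (ncomp V B) - real (ncomp V E) \<le> real (card (E - B)) / density V E"
proof -
  have "finite E" using assms(1) by (rule simple_graph_finite_edges)
  have "ncomp V B < card V" using assms by (rule ncomp_less_card_if_nonempty)
  moreover have "ncomp V E < card V"
    using ncomp_less_card_if_nonempty[OF assms(1) order_refl] assms(2,3) by blast
  ultimately have rank_pos: "real (card V) - ncomp V B > 0" "real (card V) - ncomp V E > 0"
    and rank_eq: "real (grank V B) = real (card V) - ncomp V B"
                 "real (grank V E) = real (card V) - ncomp V E"
    unfolding grank_def by (simp_all add: of_nat_diff)
  have card_pos: "real (card E) > 0"
    using assms(2,3) \<open>finite E\<close> by (auto simp: card_gt_0_iff)
  have card_diff: "real (card (E - B)) = real (card E) - real (card B)"
    using assms(2) \<open>finite E\<close> by (simp add: card_Diff_subset card_mono finite_subset of_nat_diff)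
  show ?thesis
    unfolding density_def rank_eq card_diff
    by (rule divide_le_divide_iff_diff_le[OF rank_pos card_pos])
qed

theorem proposition3p12:
  fixes V :: "'a set" and E :: "'a set set"
  assumes "simple_graph V E" and "E \<noteq> {}"
  shows "uniformly_dense V E \<longleftrightarrow>
    (\<forall>A. A \<subset> E \<longrightarrow>
       real (ncomp V (E - A)) - real (ncomp V E) \<le> real (card A) / density V E)"
proof -
  let ?bound = "\<lambda>B. real (ncomp V B) - real (ncomp V E) \<le> real (card (E - B)) / density V E"
  have "uniformly_dense V E \<longleftrightarrow> (\<forall>B. B \<subseteq> E \<and> B \<noteq> {} \<longrightarrow> ?bound B)"
    unfolding uniformly_dense_def
    using density_le_iff_ncomp_diff_le[OF assms(1)] by blast
  also have "\<dots> \<longleftrightarrow> (\<forall>A. A \<subset> E \<longrightarrow> ?bound (E - A))"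
  proof
    assume "\<forall>B. B \<subseteq> E \<and> B \<noteq> {} \<longrightarrow> ?bound B"
    then show "\<forall>A. A \<subset> E \<longrightarrow> ?bound (E - A)" by blast
  next
    assume complement: "\<forall>A. A \<subset> E \<longrightarrow> ?bound (E - A)"
    show "\<forall>B. B \<subseteq> E \<and> B \<noteq> {} \<longrightarrow> ?bound B"
    proof (intro allI impI)
      fix B assume "B \<subseteq> E \<and> B \<noteq> {}"
      then have "E - B \<subset> E" and "E - (E - B) = B" by auto
      then show "?bound B" using complement by metis
    qed
  qed
  also have "\<dots> \<longleftrightarrow> (\<forall>A. A \<subset> E \<longrightarrow>
      real (ncomp V (E - A)) - real (ncomp V E) \<le> real (card A) / density V E)"
    by (intro all_cong1 imp_cong refl) (simp add: double_diff)
  finally show ?thesis .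
qed

end
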